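(* Let $(G,\lambda)$ be a matching problem, $G=(V,E)$ a finite simple graph and $\lambda\in\mathbb{R}_{>0}^n$, and consider the condition (C): $\sum_{i\in V(\mathcal{I})}\lambda_i>\frac12\sum_{i\in V}\lambda_i$ for every independent set $\mathcal{I}$ of $G$, where $V(\mathcal{I})=\bigcup_{i\in\mathcal{I}}V_i$. If either (i) $G$ is a complete graph with $n\ge3$ nodes, or (ii) $G$ is the diamond graph ($V=\{1,2,3,4\}$, $E=\{\{1,2\},\{1,3\},\{2,3\},\{2,4\},\{3,4\}\}$), then stabilizability of $(G,\lambda)$ implies (C), and therefore $(G,\lambda,\Phi)$ is stable for every greedy policy $\Phi$ adapted to $G$. If either (iii) $G$ has diameter at least $3$, or (iv) $G$ contains a node of degree $1$, then (C) is never satisfied.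
   Context: $V_i$ is the set of neighbours of $i$; an independent set is a non-empty set of pairwise non-adjacent nodes. Matching model: classes arrive as independent Poisson processes of rates $\lambda_i$; classes $i,j$ matchable iff $\{i,j\}\in E$; unmatched items wait. A policy adapted to $G$: countable state space with queue-size map $|\cdot|$ and unique empty state, probabilities $\Phi(s,i,j,s')$ of matching an arriving class-$i$ item with a waiting neighbour class $j$ or leaving it unmatched ($j=\bot$), new state consistent with queue sizes, irreducible state chain from the empty state. Greedy: no arriving item is left unmatched while a compatible item is waiting. Stable: the state chain is positive recurrent; $(G,\lambda)$ is stabilizable if some policy makes it stable. *)

theory Defs
  imports "HOL-Probability.Probability" "HOL-Library.Extended_Nat"
begin

definition simple_graph :: "nat \<Rightarrow> nat set set \<Rightarrow> bool" where
  "simple_graph n E \<longleftrightarrow>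
     (\<forall>e\<in>E. \<exists>i j. e = {i, j} \<and> i \<noteq> j \<and> i \<in> {1..n} \<and> j \<in> {1..n})"

definition nbrs :: "nat set set \<Rightarrow> nat \<Rightarrow> nat set" where
  "nbrs E i = {j. {i, j} \<in> E}"

definition independent_set :: "nat \<Rightarrow> nat set set \<Rightarrow> nat set \<Rightarrow> bool" where
  "independent_set n E I \<longleftrightarrow> I \<noteq> {} \<and> I \<subseteq> {1..n} \<and>
     (\<forall>i\<in>I. \<forall>j\<in>I. {i, j} \<notin> E)"

definition nbr_set :: "nat set set \<Rightarrow> nat set \<Rightarrow> nat set" where
  "nbr_set E I = (\<Union>i\<in>I. nbrs E i)"

definition condC :: "nat \<Rightarrow> nat set set \<Rightarrow> (nat \<Rightarrow> real) \<Rightarrow> bool" where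
  "condC n E lam \<longleftrightarrow> (\<forall>I. independent_set n E I \<longrightarrow>
      (\<Sum>i\<in>nbr_set E I. lam i) > (\<Sum>i\<in>{1..n}. lam i) / 2)"

definition complete_graph :: "nat \<Rightarrow> nat set set \<Rightarrow> bool" where
  "complete_graph n E \<longleftrightarrow> E = {{i, j} | i j. i \<in> {1..n} \<and> j \<in> {1..n} \<and> i \<noteq> j}"

definition diamond_graph :: "nat \<Rightarrow> nat set set \<Rightarrow> bool" where
  "diamond_graph n E \<longleftrightarrow> n = 4 \<and> E = {{1,2},{1,3},{2,3},{2,4},{3,4}}"

definition walk :: "nat set set \<Rightarrow> nat \<Rightarrow> nat \<Rightarrow> nat \<Rightarrow> bool" where
  "walk E u v k \<longleftrightarrow> (\<exists>p :: nat \<Rightarrow> nat. p 0 = u \<and> p k = v \<and> (\<forall>i<k. {p i, p (Suc i)} \<in> E))"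

text \<open>Graph distance (infinite if no path).\<close>
definition gdist :: "nat set set \<Rightarrow> nat \<Rightarrow> nat \<Rightarrow> enat" where
  "gdist E u v = (INF k\<in>{k. walk E u v k}. enat k)"

definition diameter :: "nat \<Rightarrow> nat set set \<Rightarrow> enat" where
  "diameter n E = (SUP u\<in>{1..n}. SUP v\<in>{1..n}. gdist E u v)"

definition degree :: "nat \<Rightarrow> nat set set \<Rightarrow> nat \<Rightarrow> nat" where
  "degree n E i = card {j \<in> {1..n}. {i, j} \<in> E}"

text \<open>A policy: state set S, queue-size map q, empty state s0, and for each state s and
  arriving class i a probability distribution Phi s i over pairs (j, s') where j = None means
  the arriving item is left unmatched (j = \<bottom>) and j = Some k means it is matched with a waiting
  item of class k; s' is the new state.\<close>

text \<open>One-step transition (class i arrives with probability lam i / sum lam): expectation of f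
  at the next state, started in s (uniformized / embedded chain of the arrival process).\<close>
definition Pexp :: "nat \<Rightarrow> (nat \<Rightarrow> real) \<Rightarrow> ('s \<Rightarrow> nat \<Rightarrow> (nat option \<times> 's) pmf) \<Rightarrow> 's
                    \<Rightarrow> ('s \<Rightarrow> real) \<Rightarrow> real" where
  "Pexp n lam Phi s f = (\<Sum>i\<in>{1..n}. lam i / (\<Sum>k\<in>{1..n}. lam k) *
        measure_pmf.expectation (Phi s i) (\<lambda>x. f (snd x)))"

definition step :: "nat \<Rightarrow> (nat \<Rightarrow> real) \<Rightarrow> ('s \<Rightarrow> nat \<Rightarrow> (nat option \<times> 's) pmf) \<Rightarrow> ('s \<times> 's) set" where
  "step n lam Phi = {(s, t). \<exists>i\<in>{1..n}. lam i > 0 \<and> (\<exists>j. pmf (Phi s i) (j, t) > 0)}"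

definition adapted_policy ::
  "nat \<Rightarrow> nat set set \<Rightarrow> (nat \<Rightarrow> real) \<Rightarrow> 's set \<Rightarrow> ('s \<Rightarrow> nat \<Rightarrow> nat) \<Rightarrow> 's
     \<Rightarrow> ('s \<Rightarrow> nat \<Rightarrow> (nat option \<times> 's) pmf) \<Rightarrow> bool" where
  "adapted_policy n E lam S q s0 Phi \<longleftrightarrow>
     countable S \<and> s0 \<in> S \<and>
     (\<forall>s\<in>S. \<forall>i. i \<notin> {1..n} \<longrightarrow> q s i = 0) \<and>
     (\<forall>s\<in>S. (\<forall>i\<in>{1..n}. q s i = 0) \<longleftrightarrow> s = s0) \<and>
     (\<forall>s\<in>S. \<forall>i\<in>{1..n}. \<forall>(j, t)\<in>set_pmf (Phi s i). t \<in> S \<and>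
        (case j of
           None \<Rightarrow> q t = (q s)(i := q s i + 1)
         | Some k \<Rightarrow> k \<in> nbrs E i \<and> q s k > 0 \<and> q t = (q s)(k := q s k - 1))) \<and>
     (\<forall>s\<in>S. \<forall>t\<in>S. (s, t) \<in> (step n lam Phi \<inter> (S \<times> S))\<^sup>*)"

definition greedy ::
  "nat \<Rightarrow> nat set set \<Rightarrow> 's set \<Rightarrow> ('s \<Rightarrow> nat \<Rightarrow> nat)
     \<Rightarrow> ('s \<Rightarrow> nat \<Rightarrow> (nat option \<times> 's) pmf) \<Rightarrow> bool" where
  "greedy n E S q Phi \<longleftrightarrow>
     (\<forall>s\<in>S. \<forall>i\<in>{1..n}. \<forall>(j, t)\<in>set_pmf (Phi s i).
        j = None \<longrightarrow> (\<forall>k\<in>nbrs E i. q s k = 0))"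

text \<open>Probability, started in t, of hitting state a for the first time at step k.\<close>
fun hit :: "nat \<Rightarrow> (nat \<Rightarrow> real) \<Rightarrow> ('s \<Rightarrow> nat \<Rightarrow> (nat option \<times> 's) pmf) \<Rightarrow> 's
              \<Rightarrow> nat \<Rightarrow> 's \<Rightarrow> real" where
  "hit n lam Phi a 0 t = (if t = a then 1 else 0)"
| "hit n lam Phi a (Suc k) t = (if t = a then 0 else Pexp n lam Phi t (hit n lam Phi a k))"

definition first_return :: "nat \<Rightarrow> (nat \<Rightarrow> real) \<Rightarrow> ('s \<Rightarrow> nat \<Rightarrow> (nat option \<times> 's) pmf)
                              \<Rightarrow> 's \<Rightarrow> nat \<Rightarrow> real" where
  "first_return n lam Phi a k = (if k = 0 then 0 else Pexp n lam Phi a (hit n lam Phi a (k - 1)))"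

definition positive_recurrent :: "nat \<Rightarrow> (nat \<Rightarrow> real) \<Rightarrow> ('s \<Rightarrow> nat \<Rightarrow> (nat option \<times> 's) pmf)
                                    \<Rightarrow> 's \<Rightarrow> bool" where
  "positive_recurrent n lam Phi a \<longleftrightarrow>
     first_return n lam Phi a sums 1 \<and> summable (\<lambda>k. real k * first_return n lam Phi a k)"

definition stable :: "nat \<Rightarrow> (nat \<Rightarrow> real) \<Rightarrow> 's set \<Rightarrow> ('s \<Rightarrow> nat \<Rightarrow> (nat option \<times> 's) pmf) \<Rightarrow> bool" where
  "stable n lam S Phi \<longleftrightarrow> (\<forall>s\<in>S. positive_recurrent n lam Phi s)"

text \<open>Stabilizable: some adapted policy is stable. Any countable state space is in bijection
  with a subset of nat, so state spaces are taken to be subsets of nat here.\<close>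
definition stabilizable :: "nat \<Rightarrow> nat set set \<Rightarrow> (nat \<Rightarrow> real) \<Rightarrow> bool" where
  "stabilizable n E lam \<longleftrightarrow>
     (\<exists>(S :: nat set) q s0 Phi. adapted_policy n E lam S q s0 Phi \<and> stable n lam S Phi)"

end

(* Under (C) the total number of waiting items is a Lyapunov function for every greedy
   policy: the waiting classes form an independent set I, an arriving item of a class in
   V(I) always finds a partner, so away from the empty state the expected change of the
   queue length is at most 1 - 2 lambda(V(I)) / lambda(V) < 0, and Foster's criterion gives
   positive recurrence of all states.

   Conversely, let (C) fail for an independent set I.  In the complete and the diamond graph
   the non-neighbours A of I again form an independent set, and lambda(A) >= lambda(V) / 2.
   Under any policy, the number of waiting items of classes in A minus the number of the
   others then moves by +-1, increases with every arrival from A, and is a submartingale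
   vanishing at the empty state; optional stopping shows that its return time to the
   empty state has infinite mean.

   Finally, (C) for single vertices says that every neighbourhood carries more than half of
   the total rate, which is impossible for two vertices at distance at least 3 (disjoint
   neighbourhoods) and for a vertex whose only neighbour is j (then j alone carries more
   than half, and the neighbourhood of j does not contain j). *)

theory Submission
  imports Defs
begin

section \<open>One-step expectations\<close>

text \<open>\<open>Pexp\<close> is a sum of integrals over the successor distributions \<open>Phi t i\<close>; boundedness
  on their supports makes these integrals exist, so that \<open>Pexp\<close> is linear and monotone.\<close>

definition succ_bounded ::
  "nat \<Rightarrow> ('s \<Rightarrow> nat \<Rightarrow> (nat option \<times> 's) pmf) \<Rightarrow> 's \<Rightarrow> ('s \<Rightarrow> real) \<Rightarrow> bool" where
  "succ_bounded n Phi t f \<longleftrightarrow> (\<forall>i\<in>{1..n}. \<exists>B. \<forall>x\<in>set_pmf (Phi t i). \<bar>f (snd x)\<bar> \<le> B)"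

lemma integrable_succ_bounded:
  "succ_bounded n Phi t f \<Longrightarrow> i \<in> {1..n} \<Longrightarrow> integrable (measure_pmf (Phi t i)) (\<lambda>x. f (snd x))"
proof -
  assume "succ_bounded n Phi t f" "i \<in> {1..n}"
  then obtain B where "\<forall>x\<in>set_pmf (Phi t i). \<bar>f (snd x)\<bar> \<le> B"
    unfolding succ_bounded_def by blast
  then show ?thesis
    by (intro measure_pmf.integrable_const_bound[where B=B]) (auto simp: AE_measure_pmf_iff)
qed

lemma succ_bounded_if_bounded: "(\<And>s. \<bar>f s\<bar> \<le> B) \<Longrightarrow> succ_bounded n Phi t f"
  unfolding succ_bounded_def by blast

lemma succ_bounded_const: "succ_bounded n Phi t (\<lambda>_. c)"
  by (rule succ_bounded_if_bounded[where B="\<bar>c\<bar>"]) simp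

lemma succ_bounded_add:
  assumes "succ_bounded n Phi t f" "succ_bounded n Phi t g"
  shows "succ_bounded n Phi t (\<lambda>s. f s + g s)"
  unfolding succ_bounded_def
proof
  fix i assume "i \<in> {1..n}"
  then obtain B C where "\<forall>x\<in>set_pmf (Phi t i). \<bar>f (snd x)\<bar> \<le> B" "\<forall>x\<in>set_pmf (Phi t i). \<bar>g (snd x)\<bar> \<le> C"
    using assms unfolding succ_bounded_def by meson
  then show "\<exists>B. \<forall>x\<in>set_pmf (Phi t i). \<bar>f (snd x) + g (snd x)\<bar> \<le> B"
    by (intro exI[of _ "B + C"]) (auto intro: abs_triangle_ineq[THEN order_trans] add_mono)
qed

lemma succ_bounded_cmult:
  assumes "succ_bounded n Phi t f"
  shows "succ_bounded n Phi t (\<lambda>s. c * f s)"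
  unfolding succ_bounded_def
proof
  fix i assume "i \<in> {1..n}"
  then obtain B where "\<forall>x\<in>set_pmf (Phi t i). \<bar>f (snd x)\<bar> \<le> B"
    using assms unfolding succ_bounded_def by meson
  then show "\<exists>B. \<forall>x\<in>set_pmf (Phi t i). \<bar>c * f (snd x)\<bar> \<le> B"
    by (intro exI[of _ "\<bar>c\<bar> * B"]) (auto simp: abs_mult intro: mult_left_mono)
qed

lemma succ_bounded_diff:
  "succ_bounded n Phi t f \<Longrightarrow> succ_bounded n Phi t g \<Longrightarrow> succ_bounded n Phi t (\<lambda>s. f s - g s)"
  using succ_bounded_add[of n Phi t f "\<lambda>s. -1 * g s"] succ_bounded_cmult[of n Phi t g "-1"] by simp

lemma succ_bounded_sum:
  "finite F \<Longrightarrow> (\<And>j. j \<in> F \<Longrightarrow> succ_bounded n Phi t (f j)) \<Longrightarrow> succ_bounded n Phi t (\<lambda>s. \<Sum>j\<in>F. f j s)"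
  by (induction F rule: finite_induct) (auto intro: succ_bounded_if_bounded succ_bounded_add)

locale arrival_chain =
  fixes n :: nat and lam :: "nat \<Rightarrow> real" and Phi :: "'s \<Rightarrow> nat \<Rightarrow> (nat option \<times> 's) pmf"
  assumes rates_pos: "\<forall>i\<in>{1..n}. lam i > 0" and classes_nonempty: "n \<ge> 1"
begin

abbreviation "rate_sum \<equiv> \<Sum>k\<in>{1..n}. lam k"
abbreviation "P \<equiv> Pexp n lam Phi"

lemma rate_sum_pos: "rate_sum > 0"
  using rates_pos classes_nonempty by (intro sum_pos) auto

lemma arrival_prob_nonneg: "i \<in> {1..n} \<Longrightarrow> lam i / rate_sum \<ge> 0"
  using rates_pos rate_sum_pos by (simp add: less_imp_le)

lemma Pexp_const: "P t (\<lambda>_. c) = c"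
proof -
  have "P t (\<lambda>_. c) = (\<Sum>i\<in>{1..n}. lam i / rate_sum * c)" by (simp add: Pexp_def)
  also have "\<dots> = rate_sum / rate_sum * c" by (simp only: sum_distrib_right sum_divide_distrib)
  finally show ?thesis using rate_sum_pos by simp
qed

lemma Pexp_cmult: "P t (\<lambda>s. c * f s) = c * P t f"
  by (simp add: Pexp_def sum_distrib_left algebra_simps)

lemma Pexp_add:
  "succ_bounded n Phi t f \<Longrightarrow> succ_bounded n Phi t g \<Longrightarrow> P t (\<lambda>s. f s + g s) = P t f + P t g"
  by (simp add: Pexp_def sum.distrib[symmetric] distrib_left integrable_succ_bounded)

lemma Pexp_diff:
  "succ_bounded n Phi t f \<Longrightarrow> succ_bounded n Phi t g \<Longrightarrow> P t (\<lambda>s. f s - g s) = P t f - P t g"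
  by (simp add: Pexp_def sum_subtractf[symmetric] right_diff_distrib integrable_succ_bounded)

lemma Pexp_sum:
  "finite F \<Longrightarrow> (\<And>j. j \<in> F \<Longrightarrow> succ_bounded n Phi t (f j)) \<Longrightarrow>
     P t (\<lambda>s. \<Sum>j\<in>F. f j s) = (\<Sum>j\<in>F. P t (f j))"
  by (induction F rule: finite_induct) (simp_all add: Pexp_const Pexp_add succ_bounded_sum)

lemma Pexp_le_rate_avg:
  assumes "succ_bounded n Phi t f" "\<forall>i\<in>{1..n}. \<forall>x\<in>set_pmf (Phi t i). f (snd x) \<le> b i"
  shows "P t f \<le> (\<Sum>i\<in>{1..n}. lam i / rate_sum * b i)"
  unfolding Pexp_def
proof (rule sum_mono)
  fix i assume i: "i \<in> {1..n}"
  have "measure_pmf.expectation (Phi t i) (\<lambda>x. f (snd x)) \<le> measure_pmf.expectation (Phi t i) (\<lambda>x. b i)"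
    using assms i by (intro integral_mono_AE) (auto simp: integrable_succ_bounded AE_measure_pmf_iff)
  then have "measure_pmf.expectation (Phi t i) (\<lambda>x. f (snd x)) \<le> b i" by simp
  then show "lam i / rate_sum * measure_pmf.expectation (Phi t i) (\<lambda>x. f (snd x)) \<le> lam i / rate_sum * b i"
    using arrival_prob_nonneg[OF i] by (rule mult_left_mono)
qed

lemma Pexp_ge_rate_avg:
  assumes "succ_bounded n Phi t f" "\<forall>i\<in>{1..n}. \<forall>x\<in>set_pmf (Phi t i). b i \<le> f (snd x)"
  shows "(\<Sum>i\<in>{1..n}. lam i / rate_sum * b i) \<le> P t f"
  using Pexp_le_rate_avg[of t "\<lambda>s. - f s" "\<lambda>i. - b i"] assms
  by (simp add: Pexp_cmult[of t "-1", simplified] sum_negf succ_bounded_cmult[of n Phi t f "-1", simplified])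

lemma Pexp_mono:
  assumes "succ_bounded n Phi t f" "succ_bounded n Phi t g"
    and "\<forall>i\<in>{1..n}. \<forall>x\<in>set_pmf (Phi t i). f (snd x) \<le> g (snd x)"
  shows "P t f \<le> P t g"
proof -
  have "0 \<le> P t (\<lambda>s. g s - f s)"
    using Pexp_ge_rate_avg[of t "\<lambda>s. g s - f s" "\<lambda>_. 0"] assms by (simp add: succ_bounded_diff)
  then show ?thesis using assms by (simp add: Pexp_diff)
qed

lemma Pexp_nonneg:
  "succ_bounded n Phi t f \<Longrightarrow> \<forall>i\<in>{1..n}. \<forall>x\<in>set_pmf (Phi t i). 0 \<le> f (snd x) \<Longrightarrow> 0 \<le> P t f"
  using Pexp_ge_rate_avg[of t f "\<lambda>_. 0"] by simp

lemma Pexp_unit_interval: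
  assumes "\<And>s. 0 \<le> f s" "\<And>s. f s \<le> 1"
  shows "0 \<le> P t f \<and> P t f \<le> 1"
proof -
  have bounded: "succ_bounded n Phi t f" by (rule succ_bounded_if_bounded[where B=1]) (use assms in auto)
  have "P t f \<le> P t (\<lambda>_. 1)"
    by (rule Pexp_mono[OF bounded succ_bounded_if_bounded[where B=1]]) (use assms in auto)
  then show ?thesis using Pexp_nonneg[OF bounded] assms by (simp add: Pexp_const)
qed

lemma Pexp_ge_pmf:
  assumes "succ_bounded n Phi t f" "\<forall>i\<in>{1..n}. \<forall>x\<in>set_pmf (Phi t i). 0 \<le> f (snd x)"
    and i: "i \<in> {1..n}"
  shows "lam i / rate_sum * pmf (Phi t i) x * f (snd x) \<le> P t f"
proof -
  let ?E = "\<lambda>k. measure_pmf.expectation (Phi t k) (\<lambda>x. f (snd x))"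
  have "pmf (Phi t i) x * f (snd x) = measure_pmf.expectation (Phi t i) (\<lambda>y. f (snd y) * indicator {x} y)"
    by (subst integral_measure_pmf_real[where A="{x}"]) (auto simp: indicator_def split: if_splits)
  also have "\<dots> \<le> ?E i"
  proof (rule integral_mono_AE)
    show "integrable (measure_pmf (Phi t i)) (\<lambda>y. f (snd y) * indicator {x} y)"
      by (intro integrable_real_mult_indicator integrable_succ_bounded[OF assms(1) i]) auto
  qed (use assms i in \<open>auto simp: integrable_succ_bounded AE_measure_pmf_iff split: split_indicator\<close>)
  finally have "lam i / rate_sum * (pmf (Phi t i) x * f (snd x)) \<le> lam i / rate_sum * ?E i"
    using arrival_prob_nonneg[OF i] by (rule mult_left_mono)
  also have "\<dots> \<le> P t f" unfolding Pexp_def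
  proof (rule member_le_sum)
    fix k assume "k \<in> {1..n} - {i}"
    then show "0 \<le> lam k / rate_sum * ?E k"
      by (intro mult_nonneg_nonneg arrival_prob_nonneg integral_nonneg_AE)
         (use assms in \<open>auto simp: AE_measure_pmf_iff\<close>)
  qed (use i in auto)
  finally show ?thesis by (simp add: mult.assoc)
qed

lemma rate_avg_plus_minus:
  assumes "N \<subseteq> {1..n}"
  shows "(\<Sum>i\<in>{1..n}. lam i / rate_sum * (c + (if i \<in> N then -1 else 1)))
           = c + (rate_sum - 2 * (\<Sum>i\<in>N. lam i)) / rate_sum"
proof -
  let ?p = "\<lambda>i. lam i / rate_sum"
  have total: "(\<Sum>i\<in>{1..n}. ?p i) = 1"
    using rate_sum_pos by (simp add: sum_divide_distrib[symmetric])
  have restrict: "(\<Sum>i\<in>{1..n}. if i \<in> N then ?p i else 0) = (\<Sum>i\<in>N. lam i) / rate_sum"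
    using assms by (simp add: sum.inter_restrict[symmetric] Int_absorb1 sum_divide_distrib)
  have "(\<Sum>i\<in>{1..n}. ?p i * (c + (if i \<in> N then -1 else 1)))
          = (\<Sum>i\<in>{1..n}. ?p i * c + ?p i - 2 * (if i \<in> N then ?p i else 0))"
    using rate_sum_pos by (intro sum.cong) (auto simp: field_simps)
  also have "\<dots> = (\<Sum>i\<in>{1..n}. ?p i) * c + (\<Sum>i\<in>{1..n}. ?p i)
                    - 2 * (\<Sum>i\<in>{1..n}. if i \<in> N then ?p i else 0)"
    by (simp only: sum_subtractf sum.distrib sum_distrib_left[symmetric] sum_distrib_right[symmetric])
  also have "\<dots> = c + (rate_sum - 2 * (\<Sum>i\<in>N. lam i)) / rate_sum"
    unfolding total restrict using rate_sum_pos by (simp add: diff_divide_distrib)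
  finally show ?thesis .
qed

section \<open>Hitting and return times\<close>

abbreviation "H \<equiv> hit n lam Phi"
abbreviation "FR \<equiv> first_return n lam Phi"

lemma hit_unit_interval: "0 \<le> H a k t \<and> H a k t \<le> 1"
proof (induction k arbitrary: t)
  case (Suc k) then show ?case using Pexp_unit_interval[of "H a k" t] by auto
qed simp

lemma succ_bounded_hit: "succ_bounded n Phi t (H a k)"
  by (rule succ_bounded_if_bounded[where B=1]) (use hit_unit_interval in \<open>auto simp: abs_le_iff\<close>)

text \<open>\<open>survival a K t\<close> is the probability that the chain started in \<open>t\<close> avoids \<open>a\<close> at times
  \<open>0, \<dots>, K\<close>, and \<open>trunc_hit_time a K t\<close> is the expectation of \<open>min T K\<close> for the hitting time
  \<open>T\<close> of \<open>a\<close>.\<close>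

definition survival :: "'s \<Rightarrow> nat \<Rightarrow> 's \<Rightarrow> real" where
  "survival a K t = 1 - (\<Sum>j\<le>K. H a j t)"

definition trunc_hit_time :: "'s \<Rightarrow> nat \<Rightarrow> 's \<Rightarrow> real" where
  "trunc_hit_time a K t = (\<Sum>k<K. survival a k t)"

lemma survival_at: "survival a K a = 0"
proof -
  have "(\<Sum>j\<le>K. H a j a) = (\<Sum>j\<le>K. if j = 0 then 1 else 0)"
    by (rule sum.cong) (auto simp: gr0_conv_Suc)
  then show ?thesis by (simp add: survival_def)
qed

lemma survival_0: "t \<noteq> a \<Longrightarrow> survival a 0 t = 1"
  by (simp add: survival_def)

lemma survival_Suc: "t \<noteq> a \<Longrightarrow> survival a (Suc K) t = P t (survival a K)"
proof -
  assume "t \<noteq> a"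
  then have "survival a (Suc K) t = 1 - (\<Sum>j\<le>K. P t (H a j))"
    unfolding survival_def by (subst sum.atMost_Suc_shift) simp
  also have "\<dots> = P t (\<lambda>_. 1) - P t (\<lambda>s. \<Sum>j\<le>K. H a j s)"
    by (simp add: Pexp_const Pexp_sum succ_bounded_hit)
  also have "\<dots> = P t (survival a K)" unfolding survival_def
    by (rule Pexp_diff[symmetric]) (auto intro: succ_bounded_if_bounded[where B=1] succ_bounded_sum succ_bounded_hit)
  finally show ?thesis .
qed

lemma survival_Suc_eq: "survival a (Suc K) t = survival a K t - H a (Suc K) t"
  by (simp add: survival_def del: hit.simps)

lemma survival_unit_interval: "0 \<le> survival a K t \<and> survival a K t \<le> 1"
proof (induction K arbitrary: t)
  case 0 then show ?case by (cases "t = a") (auto simp: survival_at survival_0)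
next
  case (Suc K) then show ?case
    using Pexp_unit_interval[of "survival a K" t] by (cases "t = a") (auto simp: survival_at survival_Suc)
qed

lemma survival_antimono: "k \<le> K \<Longrightarrow> survival a K t \<le> survival a k t"
proof (induction K)
  case (Suc K) then show ?case
    using survival_Suc_eq[of a K t] hit_unit_interval[of a "Suc K" t] by (cases "k = Suc K") auto
qed simp

lemma succ_bounded_survival: "succ_bounded n Phi t (survival a K)"
  by (rule succ_bounded_if_bounded[where B=1]) (use survival_unit_interval in \<open>auto simp: abs_le_iff\<close>)

lemma trunc_hit_time_bounds: "0 \<le> trunc_hit_time a K t \<and> trunc_hit_time a K t \<le> real K"
proof -
  have "trunc_hit_time a K t \<le> (\<Sum>k<K. 1)"
    unfolding trunc_hit_time_def by (rule sum_mono) (use survival_unit_interval in auto)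
  moreover have "0 \<le> trunc_hit_time a K t"
    unfolding trunc_hit_time_def by (rule sum_nonneg) (use survival_unit_interval in auto)
  ultimately show ?thesis by simp
qed

lemma succ_bounded_trunc_hit_time: "succ_bounded n Phi t (trunc_hit_time a K)"
  by (rule succ_bounded_if_bounded[where B="real K"]) (use trunc_hit_time_bounds in \<open>auto simp: abs_le_iff\<close>)

lemma trunc_hit_time_at: "trunc_hit_time a K a = 0"
  by (simp add: trunc_hit_time_def survival_at)

lemma trunc_hit_time_Suc: "t \<noteq> a \<Longrightarrow> trunc_hit_time a (Suc K) t = 1 + P t (trunc_hit_time a K)"
proof -
  assume "t \<noteq> a"
  then have "trunc_hit_time a (Suc K) t = 1 + (\<Sum>k<K. P t (survival a k))"
    unfolding trunc_hit_time_def by (subst sum.lessThan_Suc_shift) (simp add: survival_0 survival_Suc)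
  also have "\<dots> = 1 + P t (trunc_hit_time a K)"
    unfolding trunc_hit_time_def by (simp add: Pexp_sum succ_bounded_survival)
  finally show ?thesis .
qed

lemma trunc_hit_time_mono: "k \<le> K \<Longrightarrow> trunc_hit_time a k t \<le> trunc_hit_time a K t"
  unfolding trunc_hit_time_def by (rule sum_mono2) (use survival_unit_interval in auto)

lemma survival_mult_le_trunc_hit_time: "real K * survival a K t \<le> trunc_hit_time a K t"
proof -
  have "(\<Sum>k<K. survival a K t) \<le> trunc_hit_time a K t"
    unfolding trunc_hit_time_def by (rule sum_mono) (simp add: survival_antimono)
  then show ?thesis by simp
qed

lemma weighted_hit_sum: "(\<Sum>j\<le>K. real j * H a j t) = trunc_hit_time a K t - real K * survival a K t"
proof (induction K)
  case (Suc K)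
  then have "(\<Sum>j\<le>Suc K. real j * H a j t)
               = trunc_hit_time a K t - real K * survival a K t + real (Suc K) * H a (Suc K) t"
    by (simp del: hit.simps)
  then show ?case by (simp add: trunc_hit_time_def survival_Suc_eq algebra_simps del: hit.simps)
qed (simp add: trunc_hit_time_def)

lemma first_return_nonneg: "0 \<le> FR a k"
  using Pexp_unit_interval[of "H a (k - 1)" a] hit_unit_interval by (simp add: first_return_def)

lemma first_return_partial_sum: "(\<Sum>k<Suc (Suc K). FR a k) = 1 - P a (survival a K)"
proof -
  have "(\<Sum>k<Suc (Suc K). FR a k) = (\<Sum>j\<le>K. P a (H a j))"
    by (subst sum.lessThan_Suc_shift) (simp add: first_return_def lessThan_Suc_atMost del: hit.simps)
  also have "\<dots> = P a (\<lambda>s. 1 - survival a K s)"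
    by (simp add: Pexp_sum[symmetric] succ_bounded_hit survival_def del: hit.simps)
  also have "\<dots> = 1 - P a (survival a K)"
    by (subst Pexp_diff) (auto simp: Pexp_const succ_bounded_survival intro: succ_bounded_if_bounded[where B=1])
  finally show ?thesis .
qed

lemma weighted_first_return_partial_sum:
  "(\<Sum>k<Suc (Suc K). real k * FR a k) \<le> P a (\<lambda>s. trunc_hit_time a K s + 1)"
proof -
  have "(\<Sum>k<Suc (Suc K). real k * FR a k) = (\<Sum>j\<le>K. real (Suc j) * P a (H a j))"
    by (subst sum.lessThan_Suc_shift)
       (simp add: first_return_def lessThan_Suc_atMost del: hit.simps of_nat_Suc)
  also have "\<dots> = P a (\<lambda>s. \<Sum>j\<le>K. real (Suc j) * H a j s)"
    by (simp add: Pexp_cmult Pexp_sum succ_bounded_cmult succ_bounded_hit del: hit.simps of_nat_Suc)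
  also have "\<dots> \<le> P a (\<lambda>s. trunc_hit_time a K s + 1)"
  proof (rule Pexp_mono)
    show "succ_bounded n Phi a (\<lambda>s. \<Sum>j\<le>K. real (Suc j) * H a j s)"
      by (auto intro!: succ_bounded_sum succ_bounded_cmult succ_bounded_hit)
    show "succ_bounded n Phi a (\<lambda>s. trunc_hit_time a K s + 1)"
      by (intro succ_bounded_add succ_bounded_trunc_hit_time succ_bounded_if_bounded[where B=1]) simp
    have "(\<Sum>j\<le>K. real (Suc j) * H a j s) = trunc_hit_time a K s + 1 - real (Suc K) * survival a K s" for s
      by (simp add: sum.distrib algebra_simps weighted_hit_sum survival_def del: hit.simps)
    then show "\<forall>i\<in>{1..n}. \<forall>x\<in>set_pmf (Phi a i).
                 (\<Sum>j\<le>K. real (Suc j) * H a j (snd x)) \<le> trunc_hit_time a K (snd x) + 1"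
      using survival_unit_interval by simp
  qed
  finally show ?thesis .
qed

lemma first_return_sums_1:
  assumes "(\<lambda>K. P a (survival a K)) \<longlonglongrightarrow> 0"
  shows "FR a sums 1"
proof -
  have "(\<lambda>K. \<Sum>k<Suc (Suc K). FR a k) \<longlonglongrightarrow> 1"
    unfolding first_return_partial_sum using tendsto_diff[OF tendsto_const[of 1] assms] by simp
  then have "(\<lambda>K. \<Sum>k<K. FR a k) \<longlonglongrightarrow> 1"
    using filterlim_sequentially_Suc[of "\<lambda>K. \<Sum>k<Suc K. FR a k"]
          filterlim_sequentially_Suc[of "\<lambda>K. \<Sum>k<K. FR a k"] by simp
  then show ?thesis by (simp add: sums_def)
qed

lemma positive_recurrent_if_trunc_hit_time_bounded:
  assumes bound: "\<forall>i\<in>{1..n}. \<forall>x\<in>set_pmf (Phi a i). \<forall>K. trunc_hit_time a K (snd x) \<le> W (snd x)"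
    and W_bounded: "succ_bounded n Phi a W"
  shows "positive_recurrent n lam Phi a"
  unfolding positive_recurrent_def
proof
  have "P a (survival a K) \<le> P a W / real K" if "1 \<le> K" for K
  proof -
    have "\<forall>i\<in>{1..n}. \<forall>x\<in>set_pmf (Phi a i). real K * survival a K (snd x) \<le> W (snd x)"
      using bound survival_mult_le_trunc_hit_time order_trans by blast
    then have "P a (\<lambda>s. real K * survival a K s) \<le> P a W"
      by (intro Pexp_mono succ_bounded_cmult succ_bounded_survival W_bounded)
    then show ?thesis using that by (simp add: Pexp_cmult field_simps)
  qed
  then have "(\<lambda>K. P a (survival a K)) \<longlonglongrightarrow> 0"
    using Pexp_unit_interval[of "survival a _" a] survival_unit_interval
    by (intro tendsto_sandwich[OF _ _ tendsto_const lim_const_over_n[of "P a W"]])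
       (auto intro: eventually_sequentiallyI[of 1])
  then show "FR a sums 1" by (rule first_return_sums_1)
next
  have "(\<Sum>k<N. real k * FR a k) \<le> P a (\<lambda>s. W s + 1)" for N
  proof -
    have "(\<Sum>k<N. real k * FR a k) \<le> (\<Sum>k<Suc (Suc N). real k * FR a k)"
      by (rule sum_mono2) (auto intro: mult_nonneg_nonneg first_return_nonneg)
    also have "\<dots> \<le> P a (\<lambda>s. trunc_hit_time a N s + 1)"
      by (rule weighted_first_return_partial_sum)
    also have "\<dots> \<le> P a (\<lambda>s. W s + 1)"
      by (rule Pexp_mono[OF succ_bounded_add[OF succ_bounded_trunc_hit_time succ_bounded_const]
                                succ_bounded_add[OF W_bounded succ_bounded_const]])
         (use bound in auto)
    finally show ?thesis .
  qed
  then show "summable (\<lambda>k. real k * FR a k)"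
    by (intro summableI_nonneg_bounded) (auto intro: mult_nonneg_nonneg first_return_nonneg)
qed

lemma survival_tail_vanishes:
  assumes "positive_recurrent n lam Phi a"
  shows "(\<lambda>K. real (K + 2) * P a (survival a K)) \<longlonglongrightarrow> 0"
proof -
  have sums: "FR a sums 1" and "summable (\<lambda>k. real k * FR a k)"
    using assms by (auto simp: positive_recurrent_def)
  define g where "g k = real k * FR a k" for k
  have g: "summable g" using \<open>summable _\<close> by (simp add: g_def[abs_def])
  have FR: "summable (FR a)" using sums by (rule sums_summable)
  have upper: "real (K + 2) * P a (survival a K) \<le> (\<Sum>j. g (j + (K + 2)))" for K
  proof -
    have "P a (survival a K) = 1 - (\<Sum>k<K + 2. FR a k)"
      using first_return_partial_sum[of a K] by simp
    also have "\<dots> = (\<Sum>j. FR a (j + (K + 2)))"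
      using suminf_split_initial_segment[OF FR, of "K + 2"] sums_unique[OF sums] by simp
    finally have "real (K + 2) * P a (survival a K) = (\<Sum>j. real (K + 2) * FR a (j + (K + 2)))"
      by (simp only: suminf_mult[OF summable_ignore_initial_segment[OF FR]])
    also have "\<dots> \<le> (\<Sum>j. g (j + (K + 2)))"
      by (rule suminf_le[OF _ summable_mult[OF summable_ignore_initial_segment[OF FR]]
                                summable_ignore_initial_segment[OF g]])
         (auto simp: g_def intro!: mult_right_mono first_return_nonneg)
    finally show ?thesis .
  qed
  have lower: "0 \<le> real (K + 2) * P a (survival a K)" for K
    using Pexp_unit_interval[of "survival a K" a] survival_unit_interval by simp
  have tail: "(\<lambda>K. \<Sum>j. g (j + (K + 2))) \<longlonglongrightarrow> 0"
    using LIMSEQ_ignore_initial_segment[OF suminf_exist_split2[OF g], of 2] by simp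
  show ?thesis
    by (rule tendsto_sandwich[OF _ _ tendsto_const tail]) (use lower upper in auto)
qed

end

section \<open>Foster's criterion\<close>

lemma rtrancl_after_last_visit:
  assumes "(t, a) \<in> R\<^sup>*"
  shows "(t, a) \<in> {(u, v). (u, v) \<in> R \<and> u \<noteq> b}\<^sup>* \<or>
         (\<exists>x. (b, x) \<in> R \<and> (x, a) \<in> {(u, v). (u, v) \<in> R \<and> u \<noteq> b}\<^sup>*)"
  using assms
proof (induction rule: converse_rtrancl_induct)
  case (step y z)
  show ?case
  proof (cases "y = b")
    case False
    then have "(y, z) \<in> {(u, v). (u, v) \<in> R \<and> u \<noteq> b}" using step(1) by simp
    then show ?thesis using step(3) by (meson converse_rtrancl_into_rtrancl)
  qed (use step in blast)
qed simp

context arrival_chain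
begin

fun hit_before :: "'s \<Rightarrow> 's \<Rightarrow> nat \<Rightarrow> 's \<Rightarrow> real" where
  "hit_before b c 0 t = (if t = b then 1 else 0)"
| "hit_before b c (Suc K) t = (if t = b then 1 else if t = c then 0 else P t (hit_before b c K))"

lemma hit_before_unit_interval: "0 \<le> hit_before b c K t \<and> hit_before b c K t \<le> 1"
proof (induction K arbitrary: t)
  case (Suc K) then show ?case using Pexp_unit_interval[of "hit_before b c K" t] by auto
qed simp

lemma succ_bounded_hit_before: "succ_bounded n Phi t (hit_before b c K)"
  by (rule succ_bounded_if_bounded[where B=1]) (use hit_before_unit_interval in \<open>auto simp: abs_le_iff\<close>)

lemma hit_before_at: "hit_before b c K b = 1"
  by (cases K) auto

lemma hit_before_Suc_mono: "hit_before b c K t \<le> hit_before b c (Suc K) t"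
proof (induction K arbitrary: t)
  case 0 then show ?case using Pexp_unit_interval[of "hit_before b c 0" t] by auto
next
  case (Suc K)
  have "P t (hit_before b c K) \<le> P t (hit_before b c (Suc K))"
    by (rule Pexp_mono) (use Suc in \<open>auto intro: succ_bounded_hit_before\<close>)
  then show ?case by (simp del: hit_before.simps(2) add: hit_before.simps(2)[of b c K] hit_before.simps(2)[of b c "Suc K"])
qed

lemma hit_before_mono: "k \<le> K \<Longrightarrow> hit_before b c k t \<le> hit_before b c K t"
proof (induction K)
  case (Suc K) then show ?case using hit_before_Suc_mono[of b c K t] by (cases "k = Suc K") auto
qed simp

lemma hit_before_add_le_1: "b \<noteq> c \<Longrightarrow> hit_before b c K t + hit_before c b K t \<le> 1"
proof (induction K arbitrary: t)
  case (Suc K)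
  show ?case
  proof (cases "t = b \<or> t = c")
    case False
    have "P t (hit_before b c K) + P t (hit_before c b K) = P t (\<lambda>s. hit_before b c K s + hit_before c b K s)"
      by (rule Pexp_add[symmetric]) (auto intro: succ_bounded_hit_before)
    also have "\<dots> \<le> P t (\<lambda>_. 1)"
      by (rule Pexp_mono) (use Suc in \<open>auto intro: succ_bounded_hit_before succ_bounded_add succ_bounded_const\<close>)
    finally show ?thesis using False by (simp add: Pexp_const)
  qed (use Suc.prems in auto)
qed auto

lemma hit_before_pos:
  assumes "(t, b) \<in> {(u, v). (u, v) \<in> step n lam Phi \<and> u \<noteq> c}\<^sup>*"
  shows "\<exists>K. 0 < hit_before b c K t"
  using assms
proof (induction rule: converse_rtrancl_induct)
  case base then show ?case by (intro exI[of _ 0]) simp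
next
  case (step x u)
  then obtain K where K: "0 < hit_before b c K u" by blast
  from step(1) obtain i j where x: "x \<noteq> c" and i: "i \<in> {1..n}" "0 < lam i"
    and j: "0 < pmf (Phi x i) (j, u)"
    by (auto simp: step_def)
  have "0 < lam i / rate_sum * pmf (Phi x i) (j, u) * hit_before b c K (snd (j, u))"
    using i j K rate_sum_pos by simp
  also have "\<dots> \<le> P x (hit_before b c K)"
    by (rule Pexp_ge_pmf) (use i hit_before_unit_interval in \<open>auto intro: succ_bounded_hit_before\<close>)
  finally show ?case using x by (cases "x = b") (auto intro: exI[of _ 0] exI[of _ "Suc K"])
qed

lemma return_before_bounded:
  assumes "a \<noteq> b" and reach: "(b, a) \<in> (step n lam Phi)\<^sup>*"
  obtains \<alpha> where "0 < \<alpha>" "\<And>K. P b (hit_before b a K) \<le> 1 - \<alpha>"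
proof -
  let ?R = "{(u, v). (u, v) \<in> step n lam Phi \<and> u \<noteq> b}"
  have "(b, a) \<notin> ?R\<^sup>*"
  proof
    assume "(b, a) \<in> ?R\<^sup>*"
    then show False using assms(1) by (cases rule: converse_rtranclE) auto
  qed
  then obtain x where x: "(b, x) \<in> step n lam Phi" and xa: "(x, a) \<in> ?R\<^sup>*"
    using rtrancl_after_last_visit[OF reach] by blast
  obtain L where L: "0 < hit_before a b L x" using hit_before_pos[OF xa] by blast
  from x obtain i j where i: "i \<in> {1..n}" "0 < lam i" and j: "0 < pmf (Phi b i) (j, x)"
    by (auto simp: step_def)
  define \<alpha> where "\<alpha> = P b (hit_before a b L)"
  have "lam i / rate_sum * pmf (Phi b i) (j, x) * hit_before a b L (snd (j, x)) \<le> \<alpha>"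
    unfolding \<alpha>_def by (rule Pexp_ge_pmf) (use i hit_before_unit_interval in \<open>auto intro: succ_bounded_hit_before\<close>)
  moreover have "0 < lam i / rate_sum * pmf (Phi b i) (j, x) * hit_before a b L (snd (j, x))"
    using i j L rate_sum_pos by simp
  ultimately have "0 < \<alpha>" by linarith
  moreover have "P b (hit_before b a K) \<le> 1 - \<alpha>" for K
  proof -
    have "hit_before b a K s \<le> 1 - hit_before a b L s" for s
      using hit_before_mono[of K "max K L" b a s] hit_before_mono[of L "max K L" a b s]
            hit_before_add_le_1[of b a "max K L" s] assms(1) by simp
    then have "P b (hit_before b a K) \<le> P b (\<lambda>s. 1 - hit_before a b L s)"
      by (intro Pexp_mono succ_bounded_hit_before succ_bounded_diff succ_bounded_const) auto
    also have "\<dots> = 1 - \<alpha>" unfolding \<alpha>_def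
      by (simp add: Pexp_diff Pexp_const succ_bounded_const succ_bounded_hit_before)
    finally show ?thesis .
  qed
  ultimately show thesis by (rule that)
qed

text \<open>Decomposition at the first visit to \<open>b\<close>: once \<open>b\<close> is reached before \<open>a\<close>, the remaining
  time to \<open>a\<close> is that of a chain started in \<open>b\<close>.\<close>

lemma trunc_hit_time_le_via:
  "trunc_hit_time a K t \<le> trunc_hit_time b K t + trunc_hit_time a K b * hit_before b a K t"
proof (induction K arbitrary: t)
  case 0 then show ?case by (simp add: trunc_hit_time_def)
next
  case (Suc K)
  let ?e = "\<lambda>K. trunc_hit_time a K b"
  consider "t = a" | "t = b" "t \<noteq> a" | "t \<noteq> a" "t \<noteq> b" by blast
  then show ?case
  proof cases
    case 1 then show ?thesis
      using trunc_hit_time_bounds[of b "Suc K" t] trunc_hit_time_bounds[of a "Suc K" b]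
            hit_before_unit_interval[of b a "Suc K" t]
      by (simp add: trunc_hit_time_at)
  next
    case 2 then show ?thesis by (simp add: trunc_hit_time_at hit_before_at)
  next
    case 3
    have "P t (trunc_hit_time a K) \<le> P t (\<lambda>s. trunc_hit_time b K s + ?e K * hit_before b a K s)"
      by (intro Pexp_mono succ_bounded_add succ_bounded_cmult succ_bounded_trunc_hit_time
                succ_bounded_hit_before) (use Suc in auto)
    also have "\<dots> = P t (trunc_hit_time b K) + ?e K * P t (hit_before b a K)"
      by (simp add: Pexp_add Pexp_cmult succ_bounded_trunc_hit_time succ_bounded_cmult succ_bounded_hit_before)
    finally have "trunc_hit_time a (Suc K) t \<le> trunc_hit_time b (Suc K) t + ?e K * hit_before b a (Suc K) t"
      using 3 by (simp add: trunc_hit_time_Suc)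
    also have "\<dots> \<le> trunc_hit_time b (Suc K) t + ?e (Suc K) * hit_before b a (Suc K) t"
      using trunc_hit_time_mono[of K "Suc K" a b] hit_before_unit_interval[of b a "Suc K" t]
      by (simp add: mult_right_mono)
    finally show ?thesis .
  qed
qed

lemma trunc_hit_time_from_bounded:
  assumes "a \<noteq> b" "0 < \<alpha>" and escape: "\<And>K. P b (hit_before b a K) \<le> 1 - \<alpha>"
    and bound: "\<And>K. P b (trunc_hit_time b K) \<le> B"
  shows "trunc_hit_time a K b \<le> (1 + B) / \<alpha>"
proof (induction K)
  case 0
  have "P b (trunc_hit_time b 0) = 0"
    using Pexp_const[of b 0] by (simp add: trunc_hit_time_def[abs_def])
  then show ?case using bound[of 0] assms(2) by (simp add: trunc_hit_time_def)
next
  case (Suc K)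
  let ?e = "trunc_hit_time a K b"
  have "P b (trunc_hit_time a K) \<le> P b (\<lambda>s. trunc_hit_time b K s + ?e * hit_before b a K s)"
    by (intro Pexp_mono succ_bounded_add succ_bounded_cmult succ_bounded_trunc_hit_time
              succ_bounded_hit_before) (use trunc_hit_time_le_via in auto)
  also have "\<dots> = P b (trunc_hit_time b K) + ?e * P b (hit_before b a K)"
    by (simp add: Pexp_add Pexp_cmult succ_bounded_trunc_hit_time succ_bounded_cmult succ_bounded_hit_before)
  also have "\<dots> \<le> B + (1 + B) / \<alpha> * (1 - \<alpha>)"
  proof -
    have "0 \<le> P b (hit_before b a K)"
      using Pexp_unit_interval[of "hit_before b a K" b] hit_before_unit_interval by blast
    then have "?e * P b (hit_before b a K) \<le> (1 + B) / \<alpha> * (1 - \<alpha>)"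
      using Suc escape[of K] trunc_hit_time_bounds[of a K b] by (intro mult_mono) auto
    then show ?thesis using bound[of K] by linarith
  qed
  finally show ?case
    using assms(1,2) by (simp add: trunc_hit_time_Suc field_simps)
qed

context
  fixes S :: "'s set" and V :: "'s \<Rightarrow> real" and s0 :: 's
  assumes closed: "\<forall>t\<in>S. \<forall>i\<in>{1..n}. \<forall>x\<in>set_pmf (Phi t i). snd x \<in> S"
    and V_nonneg: "\<forall>t\<in>S. 0 \<le> V t"
    and V_succ_bounded: "\<forall>t\<in>S. succ_bounded n Phi t V"
    and drift: "\<forall>t\<in>S. t \<noteq> s0 \<longrightarrow> P t V \<le> V t - 1"
    and s0_in: "s0 \<in> S"
begin

lemma trunc_hit_time_le_Lyapunov: "t \<in> S \<Longrightarrow> trunc_hit_time s0 K t \<le> V t"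
proof (induction K arbitrary: t)
  case 0 then show ?case using V_nonneg by (simp add: trunc_hit_time_def)
next
  case (Suc K)
  show ?case
  proof (cases "t = s0")
    case True then show ?thesis using V_nonneg Suc.prems by (simp add: trunc_hit_time_at)
  next
    case False
    have "P t (trunc_hit_time s0 K) \<le> P t V"
      by (rule Pexp_mono) (use Suc closed V_succ_bounded succ_bounded_trunc_hit_time in auto)
    moreover have "P t V \<le> V t - 1" using drift Suc.prems False by blast
    ultimately show ?thesis using False by (simp add: trunc_hit_time_Suc)
  qed
qed

lemma trunc_hit_time_succ_le_Lyapunov:
  "t \<in> S \<Longrightarrow> i \<in> {1..n} \<Longrightarrow> x \<in> set_pmf (Phi t i) \<Longrightarrow> trunc_hit_time s0 K (snd x) \<le> V (snd x)"
  using closed trunc_hit_time_le_Lyapunov by blast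

lemma Foster_positive_recurrent:
  assumes a: "a \<in> S" and reach: "(s0, a) \<in> (step n lam Phi)\<^sup>*"
  shows "positive_recurrent n lam Phi a"
proof (cases "a = s0")
  case True
  then show ?thesis
    using trunc_hit_time_succ_le_Lyapunov V_succ_bounded s0_in
    by (intro positive_recurrent_if_trunc_hit_time_bounded[where W=V]) auto
next
  case False
  obtain \<alpha> where \<alpha>: "0 < \<alpha>" "\<And>K. P s0 (hit_before s0 a K) \<le> 1 - \<alpha>"
    using return_before_bounded[OF False reach] by blast
  have "P s0 (trunc_hit_time s0 K) \<le> P s0 V" for K
    by (rule Pexp_mono) (use trunc_hit_time_succ_le_Lyapunov s0_in V_succ_bounded succ_bounded_trunc_hit_time in auto)
  then have e: "trunc_hit_time a K s0 \<le> (1 + P s0 V) / \<alpha>" for K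
    using trunc_hit_time_from_bounded[OF False \<alpha>] by blast
  have "trunc_hit_time a K t \<le> V t + (1 + P s0 V) / \<alpha>" if "t \<in> S" for K t
  proof -
    have "trunc_hit_time a K s0 * hit_before s0 a K t \<le> (1 + P s0 V) / \<alpha>"
      using e[of K] trunc_hit_time_bounds[of a K s0] hit_before_unit_interval[of s0 a K t]
      by (meson mult_left_le order_trans)
    then show ?thesis
      using trunc_hit_time_le_via[of a K t s0] trunc_hit_time_le_Lyapunov[OF that, of K] by linarith
  qed
  then show ?thesis
    using closed a V_succ_bounded
    by (intro positive_recurrent_if_trunc_hit_time_bounded[where W="\<lambda>s. V s + (1 + P s0 V) / \<alpha>"])
       (auto intro!: succ_bounded_add succ_bounded_const)
qed

end

section \<open>Submartingales with unit steps\<close>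

text \<open>For \<open>D a = 0\<close>, \<open>stopped_pos_part D a K t\<close> is the expectation of \<open>max (D (X (min K T))) 0\<close> for the
  chain started in \<open>t\<close> and stopped at the hitting time \<open>T\<close> of \<open>a\<close>.\<close>

fun stopped_pos_part :: "('s \<Rightarrow> real) \<Rightarrow> 's \<Rightarrow> nat \<Rightarrow> 's \<Rightarrow> real" where
  "stopped_pos_part D a 0 t = max (D t) 0"
| "stopped_pos_part D a (Suc K) t = (if t = a then 0 else P t (stopped_pos_part D a K))"

context
  fixes S :: "'s set" and D :: "'s \<Rightarrow> real" and a :: 's
  assumes closed: "\<forall>t\<in>S. \<forall>i\<in>{1..n}. \<forall>x\<in>set_pmf (Phi t i). snd x \<in> S"
    and D_at: "D a = 0"
    and unit_steps: "\<forall>t\<in>S. \<forall>i\<in>{1..n}. \<forall>x\<in>set_pmf (Phi t i). D (snd x) = D t + 1 \<or> D (snd x) = D t - 1"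
    and submartingale: "\<forall>t\<in>S. D t \<le> P t D"
begin

lemma abs_D_succ_le: "t \<in> S \<Longrightarrow> i \<in> {1..n} \<Longrightarrow> x \<in> set_pmf (Phi t i) \<Longrightarrow> \<bar>D (snd x)\<bar> \<le> \<bar>D t\<bar> + 1"
  using unit_steps by fastforce

lemma succ_bounded_pos_part: "t \<in> S \<Longrightarrow> succ_bounded n Phi t (\<lambda>s. max (D s) 0)"
  and succ_bounded_submartingale: "t \<in> S \<Longrightarrow> succ_bounded n Phi t D"
  unfolding succ_bounded_def using abs_D_succ_le by (fastforce intro!: exI[of _ "\<bar>D t\<bar> + 1"])+

lemma stopped_pos_part_range: "t \<in> S \<Longrightarrow> 0 \<le> stopped_pos_part D a K t \<and> stopped_pos_part D a K t \<le> \<bar>D t\<bar> + real K"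
proof (induction K arbitrary: t)
  case (Suc K)
  show ?case
  proof (cases "t = a")
    case False
    have succ: "0 \<le> stopped_pos_part D a K (snd x) \<and> stopped_pos_part D a K (snd x) \<le> \<bar>D t\<bar> + 1 + real K"
      if "i \<in> {1..n}" "x \<in> set_pmf (Phi t i)" for i x
    proof -
      have "snd x \<in> S" using closed Suc.prems that by blast
      then show ?thesis using Suc.IH[of "snd x"] abs_D_succ_le[OF Suc.prems that] by linarith
    qed
    then have bounded: "succ_bounded n Phi t (stopped_pos_part D a K)"
      unfolding succ_bounded_def by (metis abs_of_nonneg)
    have "0 \<le> P t (stopped_pos_part D a K)" by (rule Pexp_nonneg[OF bounded]) (use succ in auto)
    moreover have "P t (stopped_pos_part D a K) \<le> P t (\<lambda>_. \<bar>D t\<bar> + 1 + real K)"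
      by (rule Pexp_mono[OF bounded succ_bounded_const]) (use succ in auto)
    ultimately show ?thesis using False by (simp add: Pexp_const)
  qed simp
qed simp

lemma succ_bounded_stopped_pos_part: "t \<in> S \<Longrightarrow> succ_bounded n Phi t (stopped_pos_part D a K)"
  unfolding succ_bounded_def
proof (intro ballI exI)
  fix i x assume t: "t \<in> S" and i: "i \<in> {1..n}" and x: "x \<in> set_pmf (Phi t i)"
  then have "snd x \<in> S" using closed by blast
  then show "\<bar>stopped_pos_part D a K (snd x)\<bar> \<le> \<bar>D t\<bar> + 1 + real K"
    using stopped_pos_part_range[of "snd x" K] abs_D_succ_le[OF t i x] by (simp add: abs_of_nonneg)
qed

lemma stopped_pos_part_le_survival:
  "t \<in> S \<Longrightarrow> stopped_pos_part D a K t \<le> (\<bar>D t\<bar> + real K) * survival a K t"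
proof (induction K arbitrary: t)
  case 0 then show ?case using D_at by (cases "t = a") (auto simp: survival_at survival_0)
next
  case (Suc K)
  show ?case
  proof (cases "t = a")
    case False
    have "stopped_pos_part D a K (snd x) \<le> (\<bar>D t\<bar> + 1 + real K) * survival a K (snd x)"
      if "i \<in> {1..n}" "x \<in> set_pmf (Phi t i)" for i x
    proof -
      have "(\<bar>D (snd x)\<bar> + real K) * survival a K (snd x) \<le> (\<bar>D t\<bar> + 1 + real K) * survival a K (snd x)"
        using abs_D_succ_le[OF Suc.prems that] survival_unit_interval[of a K "snd x"]
        by (intro mult_right_mono) auto
      moreover have "snd x \<in> S" using closed Suc.prems that by blast
      ultimately show ?thesis using Suc.IH[of "snd x"] by linarith
    qed
    then have "P t (stopped_pos_part D a K) \<le> P t (\<lambda>s. (\<bar>D t\<bar> + 1 + real K) * survival a K s)"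
      by (intro Pexp_mono succ_bounded_stopped_pos_part[OF Suc.prems] succ_bounded_cmult succ_bounded_survival) auto
    then show ?thesis using False by (simp add: Pexp_cmult survival_Suc add.assoc)
  qed (simp add: survival_at)
qed

lemma stopped_pos_part_ge: "t \<in> S \<Longrightarrow> max (D t) 0 \<le> stopped_pos_part D a K t"
proof (induction K arbitrary: t)
  case (Suc K)
  show ?case
  proof (cases "t = a")
    case False
    have "D t \<le> P t D" using submartingale Suc.prems by blast
    also have "\<dots> \<le> P t (\<lambda>s. max (D s) 0)"
      by (rule Pexp_mono) (auto intro: succ_bounded_submartingale succ_bounded_pos_part Suc.prems)
    also have "\<dots> \<le> P t (stopped_pos_part D a K)"
      by (rule Pexp_mono) (use Suc closed in \<open>auto intro: succ_bounded_pos_part succ_bounded_stopped_pos_part\<close>)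
    finally show ?thesis
      using False stopped_pos_part_range[OF Suc.prems, of "Suc K"] by simp
  qed (simp add: D_at)
qed simp

text \<open>Optional stopping for \<open>max D 0\<close>, stopped at the return time \<open>T\<close> to \<open>a\<close>, after a first
  step that goes up with probability at least \<open>lam i / rate_sum\<close>; the right-hand side is at most
  \<open>(K + 2) P(T > K + 1)\<close>.\<close>

lemma arrival_prob_le_survival:
  assumes a: "a \<in> S" and i: "i \<in> {1..n}" and up: "\<forall>x\<in>set_pmf (Phi a i). D (snd x) = 1"
  shows "lam i / rate_sum \<le> real (K + 2) * P a (survival a K)"
proof -
  have "(\<Sum>k\<in>{1..n}. lam k / rate_sum * (if k = i then 1 else 0)) \<le> P a (\<lambda>s. max (D s) 0)"
    by (rule Pexp_ge_rate_avg[OF succ_bounded_pos_part[OF a]]) (simp add: up)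
  moreover have "(\<Sum>k\<in>{1..n}. lam k / rate_sum * (if k = i then 1 else 0))
                   = (\<Sum>k\<in>{1..n}. if k = i then lam k / rate_sum else 0)"
    by (rule sum.cong) simp_all
  moreover have "\<dots> = lam i / rate_sum" using i by (subst sum.delta) auto
  ultimately have "lam i / rate_sum \<le> P a (\<lambda>s. max (D s) 0)" by linarith
  also have "\<dots> \<le> P a (stopped_pos_part D a K)"
  proof (rule Pexp_mono[OF succ_bounded_pos_part[OF a] succ_bounded_stopped_pos_part[OF a]], intro ballI)
    fix j x assume "j \<in> {1..n}" "x \<in> set_pmf (Phi a j)"
    then have "snd x \<in> S" using closed a by blast
    then show "max (D (snd x)) 0 \<le> stopped_pos_part D a K (snd x)" by (rule stopped_pos_part_ge)
  qed
  also have "\<dots> \<le> P a (\<lambda>s. (1 + real K) * survival a K s)"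
  proof (rule Pexp_mono[OF succ_bounded_stopped_pos_part[OF a] succ_bounded_cmult[OF succ_bounded_survival]])
    show "\<forall>j\<in>{1..n}. \<forall>x\<in>set_pmf (Phi a j). stopped_pos_part D a K (snd x) \<le> (1 + real K) * survival a K (snd x)"
    proof (intro ballI)
      fix j x assume j: "j \<in> {1..n}" and x: "x \<in> set_pmf (Phi a j)"
      have "snd x \<in> S" using closed a j x by blast
      moreover have "\<bar>D (snd x)\<bar> = 1" using bspec[OF bspec[OF bspec[OF unit_steps a] j] x] D_at by auto
      ultimately show "stopped_pos_part D a K (snd x) \<le> (1 + real K) * survival a K (snd x)"
        using stopped_pos_part_le_survival[of "snd x" K] by simp
    qed
  qed
  also have "\<dots> \<le> real (K + 2) * P a (survival a K)"
    using Pexp_unit_interval[of "survival a K" a] survival_unit_interval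
    by (simp add: Pexp_cmult mult_right_mono)
  finally show ?thesis .
qed

theorem not_positive_recurrent_if_submartingale:
  assumes a: "a \<in> S" and i: "i \<in> {1..n}" and up: "\<forall>x\<in>set_pmf (Phi a i). D (snd x) = 1"
  shows "\<not> positive_recurrent n lam Phi a"
proof
  assume "positive_recurrent n lam Phi a"
  then have lim: "(\<lambda>K. real (K + 2) * P a (survival a K)) \<longlonglongrightarrow> 0" by (rule survival_tail_vanishes)
  have "0 < lam i / rate_sum" using i rates_pos rate_sum_pos by simp
  then obtain K where "real (K + 2) * P a (survival a K) < lam i / rate_sum"
    using order_tendstoD(2)[OF lim] by (auto simp: eventually_sequentially)
  with arrival_prob_le_survival[OF a i up, of K] show False by linarith
qed

end

end

section \<open>The matching model\<close>

lemma nbrs_in_range: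
  assumes "simple_graph n E" "k \<in> nbrs E i"
  shows "k \<in> {1..n} \<and> i \<in> {1..n} \<and> k \<noteq> i"
proof -
  from assms obtain a b where "{i, k} = {a, b}" "a \<noteq> b" "a \<in> {1..n}" "b \<in> {1..n}"
    unfolding simple_graph_def nbrs_def by blast
  then show ?thesis by (auto simp: doubleton_eq_iff)
qed

lemma nbr_set_subset: "simple_graph n E \<Longrightarrow> nbr_set E I \<subseteq> {1..n}"
  unfolding nbr_set_def using nbrs_in_range by blast

lemma simple_graph_no_loop: "simple_graph n E \<Longrightarrow> {i, i} \<notin> E"
  unfolding simple_graph_def by auto

lemma sum_weighted_fun_upd:
  assumes "finite F" "k \<in> F"
  shows "(\<Sum>j\<in>F. c j * real ((f(k := v)) j)) = (\<Sum>j\<in>F. c j * real (f j)) + c k * (real v - real (f k))"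
proof -
  have "(\<Sum>j\<in>F. c j * real ((f(k := v)) j)) = c k * real v + (\<Sum>j\<in>F - {k}. c j * real (f j))"
    using assms by (simp add: sum.remove)
  moreover have "(\<Sum>j\<in>F. c j * real (f j)) = c k * real (f k) + (\<Sum>j\<in>F - {k}. c j * real (f j))"
    using assms by (simp add: sum.remove)
  ultimately show ?thesis by (simp add: algebra_simps)
qed

lemma condC_margin:
  assumes "condC n E lam"
  obtains \<delta> :: real where "0 < \<delta>"
    "\<And>I. independent_set n E I \<Longrightarrow> (\<Sum>i\<in>{1..n}. lam i) / 2 + \<delta> \<le> (\<Sum>i\<in>nbr_set E I. lam i)"
proof -
  let ?excess = "\<lambda>I. (\<Sum>i\<in>nbr_set E I. lam i) - (\<Sum>i\<in>{1..n}. lam i) / 2"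
  let ?M = "?excess ` {I. independent_set n E I} \<union> {1}"
  have "finite {I. independent_set n E I}"
    by (rule finite_subset[of _ "Pow {1..n}"]) (auto simp: independent_set_def)
  then have "finite ?M" by simp
  moreover have "\<forall>m\<in>?M. 0 < m" using assms by (auto simp: condC_def)
  ultimately have "0 < Min ?M" by (subst Min_gr_iff) auto
  moreover have "(\<Sum>i\<in>{1..n}. lam i) / 2 + Min ?M \<le> (\<Sum>i\<in>nbr_set E I. lam i)"
    if "independent_set n E I" for I
  proof -
    have "Min ?M \<le> ?excess I" using \<open>finite ?M\<close> that by (intro Min_le) auto
    then show ?thesis by simp
  qed
  ultimately show thesis by (rule that)
qed

locale adapted_matching = arrival_chain n lam Phi
  for n lam and Phi :: "'s \<Rightarrow> nat \<Rightarrow> (nat option \<times> 's) pmf" +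
  fixes E :: "nat set set" and S :: "'s set" and q :: "'s \<Rightarrow> nat \<Rightarrow> nat" and s0 :: 's
  assumes graph: "simple_graph n E" and adapted: "adapted_policy n E lam S q s0 Phi"
begin

lemma empty_state_in: "s0 \<in> S"
  using adapted by (simp add: adapted_policy_def)

lemma closed: "\<forall>t\<in>S. \<forall>i\<in>{1..n}. \<forall>x\<in>set_pmf (Phi t i). snd x \<in> S"
  using adapted unfolding adapted_policy_def by fastforce

lemma empty_state_queues: "i \<in> {1..n} \<Longrightarrow> q s0 i = 0"
  using adapted empty_state_in unfolding adapted_policy_def by blast

lemma all_queues_empty_iff:
  assumes "t \<in> S" shows "(\<forall>i\<in>{1..n}. q t i = 0) \<longleftrightarrow> t = s0"
proof -
  have "\<forall>s\<in>S. (\<forall>i\<in>{1..n}. q s i = 0) \<longleftrightarrow> s = s0" using adapted by (simp add: adapted_policy_def)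
  from bspec[OF this assms] show ?thesis .
qed

lemma transition_queues:
  assumes "t \<in> S" "i \<in> {1..n}" "(j, t') \<in> set_pmf (Phi t i)"
  shows "case j of None \<Rightarrow> q t' = (q t)(i := q t i + 1)
           | Some k \<Rightarrow> k \<in> nbrs E i \<and> 0 < q t k \<and> q t' = (q t)(k := q t k - 1)"
  using adapted assms unfolding adapted_policy_def by fastforce

lemma reachable_from_empty: "t \<in> S \<Longrightarrow> (s0, t) \<in> (Restr (step n lam Phi) S)\<^sup>*"
  using adapted empty_state_in unfolding adapted_policy_def by blast

definition queue_weight :: "(nat \<Rightarrow> real) \<Rightarrow> 's \<Rightarrow> real" where
  "queue_weight c t = (\<Sum>j\<in>{1..n}. c j * real (q t j))"

definition queued :: "'s \<Rightarrow> nat set" where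
  "queued t = {i \<in> {1..n}. 0 < q t i}"

lemma queue_weight_step:
  assumes t: "t \<in> S" and i: "i \<in> {1..n}" and x: "x \<in> set_pmf (Phi t i)"
  obtains "fst x = None" "queue_weight c (snd x) = queue_weight c t + c i"
    | k where "fst x = Some k" "k \<in> nbrs E i" "k \<in> queued t"
        "queue_weight c (snd x) = queue_weight c t - c k"
proof (cases x)
  case (Pair j t')
  note step = transition_queues[OF t i x[unfolded Pair]]
  show thesis
  proof (cases j)
    case None
    then have queues: "q t' = (q t)(i := q t i + 1)" using step by simp
    have "queue_weight c t' = queue_weight c t + c i"
      unfolding queue_weight_def queues using i by (subst sum_weighted_fun_upd) auto
    then show thesis using that(1) None Pair by simp
  next
    case (Some k)
    then have k: "k \<in> nbrs E i" "0 < q t k" "q t' = (q t)(k := q t k - 1)" using step by auto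
    have "k \<in> {1..n}" using nbrs_in_range[OF graph k(1)] by blast
    then have "queue_weight c t' = queue_weight c t - c k"
      unfolding queue_weight_def k(3) using k(2) by (subst sum_weighted_fun_upd) (auto simp: of_nat_diff)
    then show thesis using that(2) Some Pair k \<open>k \<in> {1..n}\<close> by (simp add: queued_def)
  qed
qed

lemma succ_bounded_queue_weight:
  assumes "t \<in> S" "\<forall>j\<in>{1..n}. \<bar>c j\<bar> \<le> 1"
  shows "succ_bounded n Phi t (queue_weight c)"
  unfolding succ_bounded_def
proof (intro ballI exI)
  fix i x assume i: "i \<in> {1..n}" and x: "x \<in> set_pmf (Phi t i)"
  have "\<bar>queue_weight c (snd x) - queue_weight c t\<bar> \<le> 1"
    by (rule queue_weight_step[OF assms(1) i x, of c])
       (use assms(2) i nbrs_in_range[OF graph] in \<open>auto simp: queued_def\<close>)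
  then show "\<bar>queue_weight c (snd x)\<bar> \<le> \<bar>queue_weight c t\<bar> + 1" by linarith
qed

lemma greedy_queued_independent:
  assumes greedy: "greedy n E S q Phi" and t: "t \<in> S"
  shows "\<forall>x\<in>queued t. \<forall>y\<in>queued t. {x, y} \<notin> E"
  using reachable_from_empty[OF t]
proof (induction rule: rtrancl_induct)
  case base then show ?case by (auto simp: queued_def empty_state_queues)
next
  case (step u t)
  then have u: "u \<in> S" by blast
  from step(2) obtain i j where i: "i \<in> {1..n}" and "0 < pmf (Phi u i) (j, t)"
    by (auto simp: step_def)
  then have jt: "(j, t) \<in> set_pmf (Phi u i)" by (simp add: set_pmf_iff)
  note queues = transition_queues[OF u i jt]
  show ?case
  proof (cases j)
    case None
    have "\<forall>k\<in>nbrs E i. q u k = 0" using greedy u i jt None unfolding greedy_def by fastforce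
    then have "y \<in> queued u \<Longrightarrow> {i, y} \<notin> E \<and> {y, i} \<notin> E" for y
      by (auto simp: queued_def nbrs_def insert_commute)
    moreover have "queued t \<subseteq> insert i (queued u)" using queues None by (auto simp: queued_def)
    ultimately show ?thesis using step.IH simple_graph_no_loop[OF graph, of i] by blast
  next
    case Some
    then have "queued t \<subseteq> queued u" using queues by (auto simp: queued_def)
    then show ?thesis using step.IH by blast
  qed
qed

abbreviation "queue_length \<equiv> queue_weight (\<lambda>_. 1)"

text \<open>Under a greedy policy an arrival of a class adjacent to a queued class is always matched.\<close>

lemma greedy_queue_length_drift:
  assumes greedy: "greedy n E S q Phi" and t: "t \<in> S"
  shows "P t queue_length
           \<le> queue_length t + (rate_sum - 2 * (\<Sum>i\<in>nbr_set E (queued t). lam i)) / rate_sum"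
proof -
  let ?N = "nbr_set E (queued t)"
  have "P t queue_length \<le> (\<Sum>i\<in>{1..n}. lam i / rate_sum * (queue_length t + (if i \<in> ?N then -1 else 1)))"
  proof (rule Pexp_le_rate_avg[OF succ_bounded_queue_weight[OF t]], simp, intro ballI)
    fix i x assume i: "i \<in> {1..n}" and x: "x \<in> set_pmf (Phi t i)"
    show "queue_length (snd x) \<le> queue_length t + (if i \<in> ?N then -1 else 1)"
    proof (rule queue_weight_step[OF t i x, of "\<lambda>_. 1"])
      assume "fst x = None" "queue_length (snd x) = queue_length t + 1"
      moreover have "i \<notin> ?N"
      proof
        assume "i \<in> ?N"
        then obtain y where "y \<in> queued t" "i \<in> nbrs E y" unfolding nbr_set_def by blast
        moreover have "\<forall>k\<in>nbrs E i. q t k = 0"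
          using greedy t i x \<open>fst x = None\<close> unfolding greedy_def by (cases x) fastforce
        ultimately show False by (auto simp: queued_def nbrs_def insert_commute)
      qed
      ultimately show ?thesis by simp
    qed simp
  qed
  also have "\<dots> = queue_length t + (rate_sum - 2 * (\<Sum>i\<in>?N. lam i)) / rate_sum"
    by (rule rate_avg_plus_minus[OF nbr_set_subset[OF graph]])
  finally show ?thesis .
qed

lemma greedy_queue_length_decrease:
  assumes greedy: "greedy n E S q Phi"
    and margin: "\<And>I. independent_set n E I \<Longrightarrow> rate_sum / 2 + \<delta> \<le> (\<Sum>i\<in>nbr_set E I. lam i)"
    and t: "t \<in> S" "t \<noteq> s0"
  shows "P t queue_length \<le> queue_length t - 2 * \<delta> / rate_sum"
proof -
  have "queued t \<noteq> {}" using all_queues_empty_iff[OF t(1)] t(2) by (auto simp: queued_def)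
  then have "independent_set n E (queued t)"
    using greedy_queued_independent[OF greedy t(1)] by (auto simp: independent_set_def queued_def)
  then have "rate_sum - 2 * (\<Sum>i\<in>nbr_set E (queued t). lam i) \<le> - 2 * \<delta>"
    using margin by fastforce
  then have "(rate_sum - 2 * (\<Sum>i\<in>nbr_set E (queued t). lam i)) / rate_sum \<le> - 2 * \<delta> / rate_sum"
    by (rule divide_right_mono) (use rate_sum_pos in auto)
  then show ?thesis using greedy_queue_length_drift[OF greedy t(1)] by simp
qed

theorem greedy_stable:
  assumes greedy: "greedy n E S q Phi" and C: "condC n E lam"
  shows "stable n lam S Phi"
proof -
  obtain \<delta> where \<delta>: "0 < \<delta>"
    "\<And>I. independent_set n E I \<Longrightarrow> rate_sum / 2 + \<delta> \<le> (\<Sum>i\<in>nbr_set E I. lam i)"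
    using condC_margin[OF C] by blast
  define V where "V s = rate_sum / (2 * \<delta>) * queue_length s" for s
  have drift: "P t V \<le> V t - 1" if "t \<in> S" "t \<noteq> s0" for t
  proof -
    have "P t V = rate_sum / (2 * \<delta>) * P t queue_length"
      unfolding V_def[abs_def] by (rule Pexp_cmult)
    also have "\<dots> \<le> rate_sum / (2 * \<delta>) * (queue_length t - 2 * \<delta> / rate_sum)"
      using greedy_queue_length_decrease[OF greedy \<delta>(2) that] \<delta>(1) rate_sum_pos
      by (intro mult_left_mono) auto
    also have "\<dots> = V t - 1"
      using \<delta>(1) rate_sum_pos by (simp add: V_def field_simps)
    finally show ?thesis .
  qed
  have V_nonneg: "0 \<le> V t" for t
    using \<delta>(1) rate_sum_pos unfolding V_def queue_weight_def by (simp add: sum_nonneg)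
  have V_succ_bounded: "succ_bounded n Phi t V" if "t \<in> S" for t
    unfolding V_def[abs_def] by (intro succ_bounded_cmult succ_bounded_queue_weight that) simp
  show ?thesis unfolding stable_def
  proof
    fix a assume "a \<in> S"
    moreover have "(s0, a) \<in> (step n lam Phi)\<^sup>*"
      using reachable_from_empty[OF \<open>a \<in> S\<close>] rtrancl_mono[of "Restr (step n lam Phi) S"] by blast
    ultimately show "positive_recurrent n lam Phi a"
      using drift V_nonneg V_succ_bounded empty_state_in closed
      by (intro Foster_positive_recurrent[of S V s0]) auto
  qed
qed

context
  fixes A :: "nat set"
  assumes A_classes: "A \<subseteq> {1..n}" and A_independent: "\<forall>x\<in>A. \<forall>y\<in>A. {x, y} \<notin> E"
begin

abbreviation "balance \<equiv> queue_weight (\<lambda>k. if k \<in> A then 1 else - 1)"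

text \<open>An arrival from \<open>A\<close> increases the balance whether it waits or is matched, since its
  partners lie outside \<open>A\<close>.\<close>

lemma balance_up:
  assumes "t \<in> S" "k \<in> A" "x \<in> set_pmf (Phi t k)"
  shows "balance (snd x) = balance t + 1"
proof (rule queue_weight_step[OF assms(1) _ assms(3)])
  fix m assume "m \<in> nbrs E k" "balance (snd x) = balance t - (if m \<in> A then 1 else - 1)"
  moreover have "m \<notin> A" using \<open>m \<in> nbrs E k\<close> A_independent assms(2) by (auto simp: nbrs_def)
  ultimately show ?thesis by simp
qed (use assms A_classes in auto)

lemma balance_unit_steps:
  "\<forall>t\<in>S. \<forall>k\<in>{1..n}. \<forall>x\<in>set_pmf (Phi t k). balance (snd x) = balance t + 1 \<or> balance (snd x) = balance t - 1"
proof (intro ballI)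
  fix t k x assume "t \<in> S" "k \<in> {1..n}" "x \<in> set_pmf (Phi t k)"
  then show "balance (snd x) = balance t + 1 \<or> balance (snd x) = balance t - 1"
    by (rule queue_weight_step[of t k x "\<lambda>k. if k \<in> A then 1 else - 1"]) auto
qed

lemma balance_submartingale:
  assumes heavy: "rate_sum / 2 \<le> (\<Sum>i\<in>A. lam i)" and t: "t \<in> S"
  shows "balance t \<le> P t balance"
proof -
  let ?N = "{1..n} - A"
  have "(\<Sum>k\<in>{1..n}. lam k / rate_sum * (balance t + (if k \<in> ?N then -1 else 1))) \<le> P t balance"
    using balance_unit_steps t balance_up[OF t]
    by (intro Pexp_ge_rate_avg succ_bounded_queue_weight t) fastforce+
  moreover have "(\<Sum>k\<in>{1..n}. lam k / rate_sum * (balance t + (if k \<in> ?N then -1 else 1)))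
                   = balance t + (rate_sum - 2 * (\<Sum>k\<in>?N. lam k)) / rate_sum"
    by (rule rate_avg_plus_minus) blast
  moreover have "0 \<le> (rate_sum - 2 * (\<Sum>k\<in>?N. lam k)) / rate_sum"
    using A_classes heavy rate_sum_pos by (simp add: sum_diff)
  ultimately show ?thesis by linarith
qed

theorem not_stable_if_heavy_independent:
  assumes "i \<in> A" and heavy: "rate_sum / 2 \<le> (\<Sum>i\<in>A. lam i)"
  shows "\<not> stable n lam S Phi"
proof -
  have "\<not> positive_recurrent n lam Phi s0"
  proof (rule not_positive_recurrent_if_submartingale[OF closed _ balance_unit_steps _ empty_state_in])
    show "balance s0 = 0" by (simp add: queue_weight_def empty_state_queues)
    show "\<forall>t\<in>S. balance t \<le> P t balance" using balance_submartingale[OF heavy] by blast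
    show "i \<in> {1..n}" using \<open>i \<in> A\<close> A_classes by blast
    show "\<forall>x\<in>set_pmf (Phi s0 i). balance (snd x) = 1"
      using balance_up[OF empty_state_in \<open>i \<in> A\<close>] \<open>balance s0 = 0\<close> by simp
  qed
  then show ?thesis using empty_state_in unfolding stable_def by blast
qed

end

end

section \<open>Graph conditions\<close>

definition nonneighbourhoods_independent :: "nat \<Rightarrow> nat set set \<Rightarrow> bool" where
  "nonneighbourhoods_independent n E \<longleftrightarrow>
     (\<forall>k\<in>{1..n}. \<forall>x\<in>{1..n} - nbrs E k. \<forall>y\<in>{1..n} - nbrs E k. {x, y} \<notin> E)"

lemma complete_graph_nonneighbourhoods_independent:
  assumes "complete_graph n E" "simple_graph n E"
  shows "nonneighbourhoods_independent n E"
proof -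
  have "x = k" if "k \<in> {1..n}" "x \<in> {1..n} - nbrs E k" for k x
    using assms(1) that unfolding complete_graph_def nbrs_def by blast
  then show ?thesis
    using simple_graph_no_loop[OF assms(2)] unfolding nonneighbourhoods_independent_def by blast
qed

lemma diamond_graph_nonneighbourhoods_independent:
  assumes "diamond_graph n E"
  shows "nonneighbourhoods_independent n E"
proof -
  have "{1..4::nat} = {1, 2, 3, 4}" by auto
  then show ?thesis
    using assms unfolding nonneighbourhoods_independent_def diamond_graph_def nbrs_def
    by (auto simp: doubleton_eq_iff)
qed

lemma (in adapted_matching) condC_if_stable:
  assumes "stable n lam S Phi" and "nonneighbourhoods_independent n E"
  shows "condC n E lam"
  unfolding condC_def
proof (intro allI impI, rule ccontr)
  fix I assume I: "independent_set n E I" and "\<not> rate_sum / 2 < (\<Sum>i\<in>nbr_set E I. lam i)"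
  then have heavy: "rate_sum / 2 \<le> (\<Sum>i\<in>{1..n} - nbr_set E I. lam i)"
    using nbr_set_subset[OF graph] by (simp add: sum_diff)
  obtain k where k: "k \<in> I" using I unfolding independent_set_def by blast
  then have "k \<in> {1..n} - nbr_set E I" and "nbrs E k \<subseteq> nbr_set E I"
    using I unfolding independent_set_def nbr_set_def nbrs_def by blast+
  moreover have "\<forall>x\<in>{1..n} - nbr_set E I. \<forall>y\<in>{1..n} - nbr_set E I. {x, y} \<notin> E"
    using assms(2) \<open>nbrs E k \<subseteq> nbr_set E I\<close> k I
    unfolding nonneighbourhoods_independent_def independent_set_def by blast
  ultimately show False
    using not_stable_if_heavy_independent[of "{1..n} - nbr_set E I" k] heavy assms(1) by blast
qed

lemma condC_nbrs:
  assumes "condC n E lam" "simple_graph n E" "i \<in> {1..n}"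
  shows "(\<Sum>k\<in>{1..n}. lam k) / 2 < (\<Sum>k\<in>nbrs E i. lam k)"
proof -
  have "independent_set n E {i}"
    using assms(2,3) simple_graph_no_loop unfolding independent_set_def by auto
  then show ?thesis using assms(1) unfolding condC_def nbr_set_def by fastforce
qed

lemma sum_nbrs_le:
  fixes lam :: "nat \<Rightarrow> real"
  assumes "simple_graph n E" "\<forall>i\<in>{1..n}. 0 < lam i"
  shows "(\<Sum>k\<in>nbrs E j. lam k) \<le> (\<Sum>k\<in>{1..n} - {j}. lam k)"
proof (rule sum_mono2)
  show "nbrs E j \<subseteq> {1..n} - {j}" using nbrs_in_range[OF assms(1)] by blast
qed (use assms(2) in \<open>auto simp: less_imp_le\<close>)

lemma not_condC_if_degree_one:
  assumes graph: "simple_graph n E" and pos: "\<forall>i\<in>{1..n}. 0 < lam i"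
    and i: "i \<in> {1..n}" and degree: "degree n E i = 1"
  shows "\<not> condC n E lam"
proof
  assume C: "condC n E lam"
  obtain j where "{j \<in> {1..n}. {i, j} \<in> E} = {j}"
    using degree unfolding degree_def by (auto simp: card_Suc_eq)
  then have nbrs: "nbrs E i = {j}" and j: "j \<in> {1..n}"
    using nbrs_in_range[OF graph, of _ i] unfolding nbrs_def by blast+
  have "(\<Sum>k\<in>{1..n}. lam k) / 2 < lam j" using condC_nbrs[OF C graph i] nbrs by simp
  moreover have "(\<Sum>k\<in>{1..n}. lam k) / 2 < (\<Sum>k\<in>nbrs E j. lam k)" using condC_nbrs[OF C graph j] .
  moreover have "(\<Sum>k\<in>{1..n} - {j}. lam k) = (\<Sum>k\<in>{1..n}. lam k) - lam j" using j by (simp add: sum_diff1)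
  ultimately show False using sum_nbrs_le[OF graph pos, of j] by linarith
qed

lemma walk_two: "{u, w} \<in> E \<Longrightarrow> {w, v} \<in> E \<Longrightarrow> walk E u v 2"
  unfolding walk_def
  by (rule exI[of _ "\<lambda>m. if m = 0 then u else if m = 1 then w else v"]) (auto simp: less_2_cases_iff)

lemma not_condC_if_diameter_ge_3:
  assumes graph: "simple_graph n E" and pos: "\<forall>i\<in>{1..n}. 0 < lam i"
    and diameter: "3 \<le> diameter n E"
  shows "\<not> condC n E lam"
proof
  assume C: "condC n E lam"
  have "(2::enat) < diameter n E" using diameter by (rule less_le_trans[rotated]) (simp add: numeral_eq_enat)
  then obtain u v where u: "u \<in> {1..n}" and v: "v \<in> {1..n}" and far: "2 < gdist E u v"
    unfolding diameter_def by (auto simp: less_SUP_iff)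
  have disjoint: "nbrs E u \<inter> nbrs E v = {}"
  proof (rule ccontr)
    assume "nbrs E u \<inter> nbrs E v \<noteq> {}"
    then obtain w where "{u, w} \<in> E" "{v, w} \<in> E" unfolding nbrs_def by blast
    then have "walk E u v 2" by (intro walk_two) (auto simp: insert_commute)
    then have "gdist E u v \<le> enat 2" unfolding gdist_def by (intro INF_lower2[of 2]) auto
    with far show False by (simp add: numeral_eq_enat)
  qed
  have finite: "finite (nbrs E w)" for w
    using nbrs_in_range[OF graph] by (blast intro: finite_subset[of _ "{1..n}"])
  have "(\<Sum>k\<in>nbrs E u. lam k) + (\<Sum>k\<in>nbrs E v. lam k) = (\<Sum>k\<in>nbrs E u \<union> nbrs E v. lam k)"
    using disjoint finite by (simp add: sum.union_disjoint)
  also have "\<dots> \<le> (\<Sum>k\<in>{1..n}. lam k)"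
    by (rule sum_mono2) (use nbrs_in_range[OF graph] pos in \<open>auto simp: less_imp_le\<close>)
  finally show False using condC_nbrs[OF C graph u] condC_nbrs[OF C graph v] by linarith
qed

lemma adapted_matchingI:
  "simple_graph n E \<Longrightarrow> \<forall>i\<in>{1..n}. 0 < lam i \<Longrightarrow> 1 \<le> n \<Longrightarrow> adapted_policy n E lam S q s0 Phi \<Longrightarrow>
     adapted_matching n lam Phi E S q s0"
  by unfold_locales

theorem corollaryA2:
  fixes n :: nat and E :: "nat set set" and lam :: "nat \<Rightarrow> real"
  assumes graph: "simple_graph n E"
    and pos: "\<forall>i\<in>{1..n}. lam i > 0"
  shows "(((complete_graph n E \<and> n \<ge> 3) \<or> diamond_graph n E) \<longrightarrow>
           (stabilizable n E lam \<longrightarrow>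
              condC n E lam \<and>
              (\<forall>(S :: 's set) q s0 Phi. adapted_policy n E lam S q s0 Phi \<and> greedy n E S q Phi
                  \<longrightarrow> stable n lam S Phi))) \<and>
         ((diameter n E \<ge> 3 \<or> (\<exists>i\<in>{1..n}. degree n E i = 1)) \<longrightarrow> \<not> condC n E lam)"
proof (intro conjI impI allI)
  assume G: "(complete_graph n E \<and> n \<ge> 3) \<or> diamond_graph n E" and "stabilizable n E lam"
  then obtain S :: "nat set" and q s0 Phi where adapted: "adapted_policy n E lam S q s0 Phi"
    and stable_policy: "stable n lam S Phi"
    unfolding stabilizable_def by blast
  have n: "1 \<le> n" using G by (auto simp: diamond_graph_def)
  have "nonneighbourhoods_independent n E"
    using G complete_graph_nonneighbourhoods_independent[OF _ graph]
          diamond_graph_nonneighbourhoods_independent by blast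
  then show C: "condC n E lam"
    by (rule adapted_matching.condC_if_stable[OF adapted_matchingI[OF graph pos n adapted] stable_policy])
  fix S :: "'s set" and q s0 Phi
  assume "adapted_policy n E lam S q s0 Phi \<and> greedy n E S q Phi"
  then show "stable n lam S Phi"
    using adapted_matching.greedy_stable[OF adapted_matchingI[OF graph pos n], of S q s0 Phi] C by blast
next
  assume "diameter n E \<ge> 3 \<or> (\<exists>i\<in>{1..n}. degree n E i = 1)"
  then show "\<not> condC n E lam"
    using not_condC_if_diameter_ge_3[OF graph pos] not_condC_if_degree_one[OF graph pos] by blast
qed

end
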